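(* For every $m\ge1$ and $n\ge1$ there is an injective map from $Q_6(m,n)$ to $P_6(-m,n)$.
   Context: Partitions: $\lambda_1\ge\cdots\ge\lambda_\ell>0$, $\ell(\lambda)=\ell$, $\lambda_i=0$ for $i>\ell$, $s(\lambda)$ the smallest part with $s(\emptyset)=+\infty$. Rank $=\lambda_1-\ell$; rank-set $=[-\lambda_1,1-\lambda_2,\dots,\ell-1-\lambda_\ell,\ell,\ell+1,\dots]$. $Q(m,n)$: partitions of $n$ whose rank-set contains $m$; $P(-m,n)$: partitions of $n$ with rank $\ge-m$. $m$-Durfee rectangle symbol $(\alpha,\beta)_{(m+j)\times j}$ of $\lambda$: $j\ge0$ is the largest integer with $\lambda_{m+j}\ge j$; $\alpha$ is the conjugate of $(\lambda_1-j,\dots,\lambda_{m+j}-j)$ and $\beta=(\lambda_{m+j+1},\lambda_{m+j+2},\dots)$; $|\lambda|=|\alpha|+|\beta|+j(m+j)$. $Q_6(m,n)$ is the set of $\lambda\in Q(m,n)$ whose symbol has $j\ge1$, $\ell(\beta)-\ell(\alpha)\ge1$, $\alpha_1=\alpha_2=\alpha_3=m+j$ and $s(\beta)\ge2$. $P_6(-m,n)$ is the set of $\mu\in P(-m,n)$ whose symbol $(\gamma,\delta)_{(m+j')\times j'}$ has $j'\ge1$, $\ell(\gamma)=\ell(\delta)$, $\gamma_1=m+j'-2$ and $\delta_1=j'$. *)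

theory Defs
  imports Main "HOL-Library.Extended_Nat"
begin

definition is_partition :: "nat list \<Rightarrow> bool" where
  "is_partition xs \<longleftrightarrow> sorted_wrt (\<ge>) xs \<and> (\<forall>x\<in>set xs. 0 < x)"

definition partitions :: "nat \<Rightarrow> nat list set" where
  "partitions n = {xs. is_partition xs \<and> sum_list xs = n}"

text \<open>The i-th part (1-indexed), zero beyond the length.\<close>
definition part :: "nat list \<Rightarrow> nat \<Rightarrow> nat" where
  "part xs i = (if 1 \<le> i \<and> i \<le> length xs then xs ! (i - 1) else 0)"

text \<open>Smallest part, with s(empty) = infinity.\<close>
definition smallest :: "nat list \<Rightarrow> enat" where
  "smallest xs = (if xs = [] then \<infinity> else enat (Min (set xs)))"

definition prank :: "nat list \<Rightarrow> int" where
  "prank xs = int (part xs 1) - int (length xs)"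

text \<open>Rank-set [-l1, 1-l2, ..., l-1-l_l, l, l+1, ...] = { k-1-l_k : k >= 1 }.\<close>
definition rank_set :: "nat list \<Rightarrow> int set" where
  "rank_set xs = {int k - 1 - int (part xs k) | k. 1 \<le> k}"

definition Qset :: "nat \<Rightarrow> nat \<Rightarrow> nat list set" where
  "Qset m n = {xs \<in> partitions n. int m \<in> rank_set xs}"

text \<open>P(-m,n): partitions of n with rank at least -m.\<close>
definition Pset :: "nat \<Rightarrow> nat \<Rightarrow> nat list set" where
  "Pset m n = {xs \<in> partitions n. prank xs \<ge> - int m}"

definition conjugate :: "nat list \<Rightarrow> nat list" where
  "conjugate ys = map (\<lambda>i. length (filter (\<lambda>y. i \<le> y) ys)) [1..<foldr max ys 0 + 1]"

text \<open>m-Durfee rectangle symbol (alpha, beta) of size (m+j) x j.\<close>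
definition durfee_j :: "nat \<Rightarrow> nat list \<Rightarrow> nat" where
  "durfee_j m xs = (GREATEST j. j \<le> part xs (m + j))"

definition durfee_alpha :: "nat \<Rightarrow> nat list \<Rightarrow> nat list" where
  "durfee_alpha m xs = (let j = durfee_j m xs in
     conjugate (map (\<lambda>k. part xs k - j) [1..<m + j + 1]))"

definition durfee_beta :: "nat \<Rightarrow> nat list \<Rightarrow> nat list" where
  "durfee_beta m xs = drop (m + durfee_j m xs) xs"

definition Q6 :: "nat \<Rightarrow> nat \<Rightarrow> nat list set" where
  "Q6 m n = {xs \<in> Qset m n.
     (let j = durfee_j m xs; \<alpha> = durfee_alpha m xs; \<beta> = durfee_beta m xs in
       1 \<le> j \<and> int (length \<beta>) - int (length \<alpha>) \<ge> 1 \<and>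
       part \<alpha> 1 = m + j \<and> part \<alpha> 2 = m + j \<and> part \<alpha> 3 = m + j \<and>
       smallest \<beta> \<ge> 2)}"

definition P6 :: "nat \<Rightarrow> nat \<Rightarrow> nat list set" where
  "P6 m n = {xs \<in> Pset m n.
     (let j = durfee_j m xs; \<gamma> = durfee_alpha m xs; \<delta> = durfee_beta m xs in
       1 \<le> j \<and> length \<gamma> = length \<delta> \<and>
       int (part \<gamma> 1) = int m + int j - 2 \<and> part \<delta> 1 = j)}"

end

theory Submission
  imports Defs
begin

text \<open>Let \<open>\<lambda> \<in> Q\<^sub>6(m,n)\<close> have \<open>m\<close>-Durfee symbol \<open>(\<alpha>, \<beta>)\<close> with rectangle \<open>K \<times> j\<close>,
  \<open>K = m + j\<close>. Then \<open>\<alpha> = (K, K, K, \<alpha>')\<close>, and since the rank-set contains \<open>m\<close> exactly when the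
  first part under the rectangle equals \<open>j\<close>, also \<open>\<beta> = (j, \<beta>')\<close> with all parts of \<open>\<beta>'\<close> at
  least 2. Let \<open>X = \<beta>' - 2\<close> (with \<open>X\<^sub>0 = j - 2\<close>) and let \<open>Y\<close> be \<open>\<alpha>'\<close> followed by an
  extra part 1 when \<open>m\<close> is even. Exchange the two sequences with a shift by \<open>m\<close>,
  \<open>U\<^sub>k = Y\<^sub>k - m\<close> and \<open>V\<^sub>k = X\<^sub>k + m\<close>, for all \<open>k \<le> z\<^sub>0\<close>, where \<open>z\<^sub>0\<close> is the first
  index with \<open>Y\<^bsub>z\<^sub>0+1\<^esub> \<le> X\<^bsub>z\<^sub>0\<^esub> + m\<close>, and keep \<open>U = X\<close>, \<open>V = Y\<close> afterwards; this choice of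
  \<open>z\<^sub>0\<close> keeps both \<open>U\<close> and \<open>V\<close> non-increasing. The partition \<open>\<mu>\<close> with rectangle
  \<open>(K + 1) \<times> (j + 1)\<close> and symbol \<open>\<gamma> = (K - 1, V + 1)\<close>, \<open>\<delta> = (j + 1, U + 1)\<close> has the
  same weight as \<open>\<lambda>\<close>, and rank exactly \<open>-m\<close> because \<open>\<gamma>\<close> and \<open>\<delta>\<close> have equal length.
  The map is injective because \<open>z\<^sub>0\<close>, and with it \<open>X\<close> and \<open>Y\<close>, can be read off from
  \<open>U\<close> and \<open>V\<close>.\<close>

declare upt_Suc[simp del]

section \<open>Parts of a list\<close>

lemma part_Cons_Suc: "1 \<le> k \<Longrightarrow> part (x # xs) (Suc k) = part xs k"
  by (cases k) (auto simp: part_def)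

lemma part_append: "part (xs @ ys) k = (if k \<le> length xs then part xs k else part ys (k - length xs))"
  by (auto simp: part_def nth_append)

lemma part_drop: "1 \<le> i \<Longrightarrow> part (drop k xs) i = part xs (k + i)"
  by (auto simp: part_def)

lemma nth_map_upt_Suc: "i < N \<Longrightarrow> map f [Suc 0..<Suc N] ! i = f (Suc i)"
  by (simp add: nth_upt)

lemma part_map_upt: "1 \<le> k \<Longrightarrow> k \<le> N \<Longrightarrow> part (map f [Suc 0..<Suc N]) k = f k"
  by (simp add: part_def nth_map_upt_Suc)

lemma sum_list_map_upt: "sum_list (map f [Suc 0..<Suc N]) = (\<Sum>i = Suc 0..N. f i)"
  by (simp add: sum_set_upt_conv_sum_list_nat[symmetric] atLeastLessThanSuc_atLeastAtMost)

lemma sorted_map_upt: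
  "(\<And>k k'. 1 \<le> k \<Longrightarrow> k \<le> k' \<Longrightarrow> f k' \<le> f k) \<Longrightarrow> sorted_wrt (\<ge>) (map f [Suc 0..<Suc N])"
  by (auto simp: sorted_wrt_map sorted_wrt_iff_nth_less nth_upt)

lemma part_antimono:
  assumes "sorted_wrt (\<ge>) xs" "1 \<le> k" "k \<le> k'"
  shows "part xs k' \<le> part xs k"
  using assms by (cases "k = k'") (auto simp: part_def sorted_wrt_iff_nth_less)

lemma foldr_max_ge: "y \<in> set xs \<Longrightarrow> y \<le> foldr max xs (0::nat)"
  by (induction xs) auto

lemma foldr_max_eq_part_1: "sorted_wrt (\<ge>) xs \<Longrightarrow> foldr max xs 0 = part xs 1"
proof (induction xs)
  case (Cons a xs)
  then have "part xs 1 \<le> a"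
    by (cases xs) (auto simp: part_def)
  with Cons show ?case by (simp add: part_def)
qed (simp add: part_def)

lemma part_le_foldr_max: "part xs k \<le> foldr max xs 0"
  unfolding part_def by (auto intro!: foldr_max_ge)

lemma mem_le_part_1: "sorted_wrt (\<ge>) xs \<Longrightarrow> y \<in> set xs \<Longrightarrow> y \<le> part xs 1"
  using foldr_max_ge foldr_max_eq_part_1 by metis

lemma part_le_sum_list: "part xs k \<le> sum_list (xs :: nat list)"
  by (auto simp: part_def intro!: member_le_sum_list)

lemma map_part_upt: "map (part xs) [Suc 0..<Suc T] = take T xs @ replicate (T - length xs) 0"
  by (rule nth_equalityI) (auto simp: nth_map_upt_Suc part_def nth_append)

lemma sum_part_upt:
  "length xs \<le> T \<Longrightarrow> (\<Sum>k = Suc 0..T. f (part xs k)) = sum_list (map f xs) + (T - length xs) * f 0"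
  using sum_list_map_upt[of "f \<circ> part xs" T] by (simp add: map_part_upt sum_list_replicate flip: map_map)

lemma sum_list_map_minus_add:
  "\<forall>x\<in>set xs. c \<le> x \<Longrightarrow> sum_list (map (\<lambda>x. x - c) xs) + c * length xs = sum_list (xs :: nat list)"
  by (induction xs) auto

lemma part_eqI:
  assumes "\<forall>x\<in>set xs. 0 < x" "\<forall>y\<in>set ys. 0 < y" "length xs \<le> T" "length ys \<le> T"
    and "\<And>k. 1 \<le> k \<Longrightarrow> k \<le> T \<Longrightarrow> part xs k = part ys k"
  shows "xs = ys"
proof -
  have pos: "\<forall>x\<in>set zs. 0 < x \<Longrightarrow> 0 < part zs (length zs) \<or> zs = []" for zs :: "nat list"
    by (cases zs rule: rev_cases) (auto simp: part_def nth_append)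
  have vanish: "length zs < k \<Longrightarrow> part zs k = 0" for zs k by (simp add: part_def)
  have "length xs = length ys"
    using pos[OF assms(1)] pos[OF assms(2)] vanish[of xs "length ys"] vanish[of ys "length xs"]
      assms(5)[of "length xs"] assms(5)[of "length ys"] assms(3,4)
    by (cases "length xs" "length ys" rule: linorder_cases) auto
  then show ?thesis
  proof (rule nth_equalityI)
    fix i assume "i < length xs"
    with assms(3) assms(5)[of "Suc i"] \<open>length xs = length ys\<close> show "xs ! i = ys ! i"
      by (simp add: part_def)
  qed
qed

section \<open>Conjugation\<close>

definition count_ge :: "nat list \<Rightarrow> nat \<Rightarrow> nat" where
  "count_ge xs i = length (filter (\<lambda>y. i \<le> y) xs)"

lemma conjugate_eq_map_count_ge: "conjugate xs = map (count_ge xs) [Suc 0..<Suc (foldr max xs 0)]"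
  by (simp add: conjugate_def count_ge_def)

lemma count_ge_Cons: "count_ge (y # ys) i = (if i \<le> y then 1 else 0) + count_ge ys i"
  by (simp add: count_ge_def)

lemma count_ge_1: "\<forall>x\<in>set xs. 0 < x \<Longrightarrow> count_ge xs 1 = length xs"
  by (simp add: count_ge_def filter_id_conv Suc_le_eq)

lemma count_ge_antimono: "i \<le> i' \<Longrightarrow> count_ge xs i' \<le> count_ge xs i"
  unfolding count_ge_def by (induction xs) auto

lemma count_ge_eq_0: "foldr max xs 0 < i \<Longrightarrow> count_ge xs i = 0"
  unfolding count_ge_def using foldr_max_ge[of _ xs] by (fastforce simp: filter_empty_conv)

lemma part_conjugate: "1 \<le> i \<Longrightarrow> part (conjugate xs) i = count_ge xs i"
  by (cases "i \<le> foldr max xs 0")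
    (auto simp: part_def conjugate_eq_map_count_ge nth_map_upt_Suc count_ge_eq_0)

text \<open>Both sides say that the cell \<open>(k, i)\<close> lies in the Ferrers diagram of \<open>ys\<close>.\<close>
lemma le_count_ge_iff:
  assumes "sorted_wrt (\<ge>) ys" "1 \<le> k" "1 \<le> i"
  shows "k \<le> count_ge ys i \<longleftrightarrow> i \<le> part ys k"
  using assms
proof (induction ys arbitrary: k)
  case (Cons y ys)
  show ?case
  proof (cases "i \<le> y")
    case True
    show ?thesis
    proof (cases "k = 1")
      case False
      with Cons.prems have k: "1 \<le> k - 1" and "part (y # ys) k = part ys (k - 1)"
        by (auto simp: part_def nth_Cons')
      moreover have "k \<le> Suc (count_ge ys i) \<longleftrightarrow> k - 1 \<le> count_ge ys i"
        using k by linarith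
      ultimately show ?thesis
        using Cons.IH[OF _ k Cons.prems(3)] Cons.prems(1) True by (simp add: count_ge_Cons)
    qed (use True in \<open>simp add: count_ge_Cons part_def\<close>)
  next
    case False
    with Cons.prems have "count_ge (y # ys) i = 0"
      by (fastforce simp: count_ge_def filter_empty_conv)
    moreover have "part (y # ys) k \<le> y"
      using Cons.prems by (auto simp: part_def nth_Cons' split: if_splits)
    ultimately show ?thesis using Cons.prems False by auto
  qed
qed (simp add: count_ge_def part_def)

lemma count_ge_map_upt:
  "count_ge (map f [Suc 0..<Suc N]) k = card {c. 1 \<le> c \<and> c \<le> N \<and> k \<le> f c}"
proof -
  have "count_ge (map f [Suc 0..<Suc N]) k = card {i. i < N \<and> k \<le> f (Suc i)}"
    unfolding count_ge_def length_filter_conv_card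
    by (intro arg_cong[where f = card]) (auto simp: nth_map_upt_Suc)
  also have "\<dots> = card (Suc ` {i. i < N \<and> k \<le> f (Suc i)})"
    by (simp add: card_image)
  also have "Suc ` {i. i < N \<and> k \<le> f (Suc i)} = {c. 1 \<le> c \<and> c \<le> N \<and> k \<le> f c}"
    by (auto simp: image_def) (metis Suc_le_D Suc_le_eq)
  finally show ?thesis .
qed

lemma count_ge_conjugate:
  assumes "sorted_wrt (\<ge>) ys" "1 \<le> k"
  shows "count_ge (conjugate ys) k = part ys k"
proof -
  have "count_ge (conjugate ys) k = card {c. 1 \<le> c \<and> c \<le> foldr max ys 0 \<and> k \<le> count_ge ys c}"
    by (simp only: conjugate_eq_map_count_ge count_ge_map_upt)
  also have "{c. 1 \<le> c \<and> c \<le> foldr max ys 0 \<and> k \<le> count_ge ys c} = {1..part ys k}"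
    using le_count_ge_iff[OF assms] part_le_foldr_max[of ys k] by auto
  finally show ?thesis by simp
qed

lemma sum_count_ge: "\<forall>y\<in>set g. y \<le> N \<Longrightarrow> (\<Sum>i = Suc 0..N. count_ge g i) = sum_list g"
proof (induction g)
  case (Cons y ys)
  have "(\<Sum>i = Suc 0..N. if i \<le> y then 1 else 0 :: nat) = card {i \<in> {Suc 0..N}. i \<le> y}"
    by (simp add: sum.If_cases Int_def)
  also have "{i \<in> {Suc 0..N}. i \<le> y} = {Suc 0..y}"
    using Cons.prems by auto
  finally have "(\<Sum>i = Suc 0..N. if i \<le> y then 1 else 0 :: nat) = y" by simp
  with Cons show ?case by (simp add: count_ge_Cons sum.distrib)
qed (simp add: count_ge_def)

lemma sorted_conjugate: "sorted_wrt (\<ge>) (conjugate ys)"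
  unfolding conjugate_eq_map_count_ge by (rule sorted_map_upt) (simp add: count_ge_antimono)

lemma conjugate_pos:
  assumes "sorted_wrt (\<ge>) ys"
  shows "\<forall>x\<in>set (conjugate ys). 0 < x"
proof
  fix x assume "x \<in> set (conjugate ys)"
  then obtain i where i: "1 \<le> i" "i \<le> part ys 1" "x = count_ge ys i"
    unfolding conjugate_eq_map_count_ge foldr_max_eq_part_1[OF assms] by auto
  with le_count_ge_iff[OF assms, of 1 i] show "0 < x" by simp
qed

lemma part_conjugate_1_le: "part (conjugate ys) 1 \<le> length ys"
  by (simp add: part_conjugate count_ge_def)

lemma conjugate_map_count_ge:
  assumes g: "sorted_wrt (\<ge>) g" "\<forall>x\<in>set g. 0 < x" and "part g 1 \<le> N"
  shows "conjugate (map (count_ge g) [Suc 0..<Suc N]) = g"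
proof -
  let ?c = "map (count_ge g) [Suc 0..<Suc N]"
  show ?thesis
  proof (rule part_eqI[where T = "length (conjugate ?c) + length g"])
    show "\<forall>x\<in>set (conjugate ?c). 0 < x"
      by (rule conjugate_pos) (rule sorted_map_upt, simp add: count_ge_antimono)
    fix k :: nat assume k: "1 \<le> k"
    then have "part g k \<le> N"
      using part_antimono[OF g(1) order_refl k] \<open>part g 1 \<le> N\<close> by simp
    then have "{c. 1 \<le> c \<and> c \<le> N \<and> k \<le> count_ge g c} = {1..part g k}"
      using le_count_ge_iff[OF g(1) k] by auto
    then show "part (conjugate ?c) k = part g k"
      using k by (simp add: part_conjugate count_ge_map_upt)
  qed (use g in auto)
qed

section \<open>Durfee symbols\<close>

definition partition_of_symbol :: "nat \<Rightarrow> nat \<Rightarrow> nat list \<Rightarrow> nat list \<Rightarrow> nat list" where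
  "partition_of_symbol m j g d = map (\<lambda>k. j + count_ge g k) [Suc 0..<Suc (m + j)] @ d"

locale durfee_symbol =
  fixes m j :: nat and g d :: "nat list"
  assumes j_pos: "1 \<le> j"
    and g: "is_partition g" "part g 1 \<le> m + j"
    and d: "is_partition d" "part d 1 \<le> j"
begin

lemma part_partition_of_symbol_upper:
  "1 \<le> k \<Longrightarrow> k \<le> m + j \<Longrightarrow> part (partition_of_symbol m j g d) k = j + count_ge g k"
  unfolding partition_of_symbol_def by (simp add: part_append part_map_upt)

lemma part_partition_of_symbol_lower:
  "m + j < k \<Longrightarrow> part (partition_of_symbol m j g d) k = part d (k - (m + j))"
  unfolding partition_of_symbol_def by (simp add: part_append)

lemma length_partition_of_symbol: "length (partition_of_symbol m j g d) = m + j + length d"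
  by (simp add: partition_of_symbol_def)

lemma part_1_partition_of_symbol: "part (partition_of_symbol m j g d) 1 = j + length g"
proof -
  have "count_ge g 1 = length g"
    using g(1) count_ge_1[of g] by (simp add: is_partition_def)
  with part_partition_of_symbol_upper[of 1] j_pos show ?thesis by simp
qed

lemma is_partition_partition_of_symbol: "is_partition (partition_of_symbol m j g d)"
proof -
  have "y \<le> j" if "y \<in> set d" for y
    using mem_le_part_1[of d y] d that by (simp add: is_partition_def)
  moreover have "sorted_wrt (\<ge>) (map (\<lambda>k. j + count_ge g k) [Suc 0..<Suc (m + j)])"
    by (rule sorted_map_upt) (simp add: count_ge_antimono)
  ultimately show ?thesis
    using d(1) j_pos unfolding is_partition_def partition_of_symbol_def
    by (fastforce simp: sorted_wrt_append)
qed

lemma durfee_j_partition_of_symbol: "durfee_j m (partition_of_symbol m j g d) = j"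
  unfolding durfee_j_def
proof (rule Greatest_equality)
  show "j \<le> part (partition_of_symbol m j g d) (m + j)"
    using j_pos by (simp add: part_partition_of_symbol_upper)
next
  fix y assume y: "y \<le> part (partition_of_symbol m j g d) (m + y)"
  show "y \<le> j"
  proof (rule ccontr)
    assume "\<not> y \<le> j"
    then have "part (partition_of_symbol m j g d) (m + y) \<le> part d 1"
      using part_antimono[of d 1 "y - j"] d(1)
      by (simp add: part_partition_of_symbol_lower is_partition_def)
    with y d(2) \<open>\<not> y \<le> j\<close> show False by simp
  qed
qed

lemma durfee_alpha_partition_of_symbol: "durfee_alpha m (partition_of_symbol m j g d) = g"
proof -
  have eq: "map (\<lambda>k. part (partition_of_symbol m j g d) k - j) [1..<m + j + 1]
      = map (count_ge g) [Suc 0..<Suc (m + j)]"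
    by (rule map_cong) (auto simp: part_partition_of_symbol_upper)
  show ?thesis
    unfolding durfee_alpha_def durfee_j_partition_of_symbol Let_def eq
    using g by (intro conjugate_map_count_ge) (auto simp: is_partition_def)
qed

lemma durfee_beta_partition_of_symbol: "durfee_beta m (partition_of_symbol m j g d) = d"
  unfolding durfee_beta_def durfee_j_partition_of_symbol by (simp add: partition_of_symbol_def)

lemma sum_list_partition_of_symbol:
  "sum_list (partition_of_symbol m j g d) = (m + j) * j + sum_list g + sum_list d"
proof -
  have "\<forall>y\<in>set g. y \<le> m + j"
    using g mem_le_part_1[of g] by (fastforce simp: is_partition_def)
  then show ?thesis
    by (simp add: partition_of_symbol_def sum_list_map_upt sum.distrib sum_count_ge)
qed

end

lemma le_sum_list_of_le_part: "y \<le> part xs (m + y) \<Longrightarrow> y \<le> sum_list xs"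
  using part_le_sum_list[of xs "m + y"] by simp

lemma durfee_j_le_part: "durfee_j m xs \<le> part xs (m + durfee_j m xs)"
  unfolding durfee_j_def by (rule GreatestI_nat[of _ 0]) (auto intro: le_sum_list_of_le_part)

lemma part_Suc_durfee_j_le: "part xs (Suc (m + durfee_j m xs)) \<le> durfee_j m xs"
proof (rule ccontr)
  assume "\<not> ?thesis"
  then have "Suc (durfee_j m xs) \<le> part xs (m + Suc (durfee_j m xs))" by simp
  then have "Suc (durfee_j m xs) \<le> durfee_j m xs"
    unfolding durfee_j_def[of m xs] by (rule Greatest_le_nat) (auto intro: le_sum_list_of_le_part)
  then show False by simp
qed

lemma durfee_j_le_part_upper:
  "sorted_wrt (\<ge>) xs \<Longrightarrow> 1 \<le> k \<Longrightarrow> k \<le> m + durfee_j m xs \<Longrightarrow> durfee_j m xs \<le> part xs k"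
  using part_antimono[of xs k "m + durfee_j m xs"] durfee_j_le_part[of m xs] by simp

lemma part_lower_le_durfee_j:
  "sorted_wrt (\<ge>) xs \<Longrightarrow> m + durfee_j m xs < k \<Longrightarrow> part xs k \<le> durfee_j m xs"
  using part_antimono[of xs "Suc (m + durfee_j m xs)" k] part_Suc_durfee_j_le[of xs m] by simp

text \<open>Above the rectangle the entries \<open>k - 1 - \<lambda>\<^sub>k\<close> of the rank-set are below \<open>m\<close>, below it
  they are at least \<open>m\<close>, with equality only just under its corner.\<close>
lemma mem_rank_set_iff:
  assumes "sorted_wrt (\<ge>) xs"
  shows "int m \<in> rank_set xs \<longleftrightarrow> part xs (Suc (m + durfee_j m xs)) = durfee_j m xs"
proof
  assume "int m \<in> rank_set xs"
  then obtain k where k: "1 \<le> k" "int m = int k - 1 - int (part xs k)"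
    by (auto simp: rank_set_def)
  with durfee_j_le_part_upper[OF assms k(1), of m] part_lower_le_durfee_j[OF assms, of m k]
  have "k = Suc (m + durfee_j m xs)" "part xs k = durfee_j m xs"
    by (cases "k \<le> m + durfee_j m xs"; linarith)+
  then show "part xs (Suc (m + durfee_j m xs)) = durfee_j m xs" by simp
next
  assume "part xs (Suc (m + durfee_j m xs)) = durfee_j m xs"
  then show "int m \<in> rank_set xs"
    unfolding rank_set_def by (intro CollectI exI[of _ "Suc (m + durfee_j m xs)"]) auto
qed

lemma durfee_alpha_eq:
  "durfee_alpha m xs = conjugate (map (\<lambda>k. part xs k - durfee_j m xs) [Suc 0..<Suc (m + durfee_j m xs)])"
  by (simp add: durfee_alpha_def Let_def)

lemma count_ge_durfee_alpha:
  assumes "is_partition xs" "1 \<le> k" "k \<le> m + durfee_j m xs"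
  shows "count_ge (durfee_alpha m xs) k = part xs k - durfee_j m xs"
proof -
  have "sorted_wrt (\<ge>) (map (\<lambda>k. part xs k - durfee_j m xs) [Suc 0..<Suc (m + durfee_j m xs)])"
    using assms(1) by (intro sorted_map_upt) (simp add: part_antimono diff_le_mono is_partition_def)
  with assms(2,3) show ?thesis
    by (simp add: durfee_alpha_eq count_ge_conjugate part_map_upt)
qed

lemma durfee_symbol_of_partition:
  assumes l: "is_partition l" and j: "1 \<le> durfee_j m l"
  shows "durfee_symbol m (durfee_j m l) (durfee_alpha m l) (durfee_beta m l)"
proof
  let ?ys = "map (\<lambda>k. part l k - durfee_j m l) [Suc 0..<Suc (m + durfee_j m l)]"
  have "sorted_wrt (\<ge>) ?ys"
    using l by (intro sorted_map_upt) (simp add: part_antimono diff_le_mono is_partition_def)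
  then show "is_partition (durfee_alpha m l)"
    by (simp add: durfee_alpha_eq is_partition_def sorted_conjugate conjugate_pos)
  show "part (durfee_alpha m l) 1 \<le> m + durfee_j m l"
    using part_conjugate_1_le[of ?ys] by (simp add: durfee_alpha_eq)
  show "is_partition (durfee_beta m l)"
    using l by (auto simp: durfee_beta_def is_partition_def sorted_wrt_drop dest: in_set_dropD)
  show "part (durfee_beta m l) 1 \<le> durfee_j m l"
    using part_Suc_durfee_j_le[of l m] by (simp add: durfee_beta_def part_drop)
qed (fact j)

lemma partition_of_durfee_symbol:
  assumes l: "is_partition l" and j: "1 \<le> durfee_j m l"
  shows "partition_of_symbol m (durfee_j m l) (durfee_alpha m l) (durfee_beta m l) = l"
proof -
  let ?j = "durfee_j m l"
  have top: "?j \<le> part l k" if "1 \<le> k" "k \<le> m + ?j" for k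
    using durfee_j_le_part_upper[of l k m] l that by (simp add: is_partition_def)
  have "0 < part l (m + ?j)"
    using j top[of "m + ?j"] by simp
  then have "m + ?j \<le> length l"
    by (auto simp: part_def split: if_splits)
  moreover have "map (\<lambda>k. ?j + count_ge (durfee_alpha m l) k) [Suc 0..<Suc (m + ?j)]
      = map (part l) [Suc 0..<Suc (m + ?j)]"
    using top by (intro map_cong) (auto simp: count_ge_durfee_alpha[OF l])
  ultimately show ?thesis
    unfolding partition_of_symbol_def durfee_beta_def by (simp add: map_part_upt)
qed

section \<open>The map on symbols\<close>

text \<open>\<open>a\<close> and \<open>b\<close> play the roles of \<open>\<alpha>\<close> and \<open>\<beta>\<close>; the assumptions are what membership of
  the partition in \<open>Q\<^sub>6\<close> gives (see \<open>Q6_symbol_of_Q6\<close> below).\<close>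
locale Q6_symbol =
  fixes m j :: nat and a b :: "nat list"
  assumes m_pos: "1 \<le> m" and j_ge_2: "2 \<le> j"
    and a: "is_partition a" "part a 1 \<le> m + j" "part a 3 = m + j"
    and b: "sorted_wrt (\<ge>) b" "\<forall>x\<in>set b. 2 \<le> x" "part b 1 = j"
    and length_a_less: "length a < length b"
begin

text \<open>\<open>T\<close> and the padding of \<open>Ys\<close> are chosen so that
  \<open>2 T + (m - 1) mod 2 = 2 (length b - 1) + m - 1\<close>, which makes the weights match.\<close>
definition "T = length b - 1 + (m - 1) div 2"
definition "Ys = drop 3 a @ replicate ((m - 1) mod 2) 1"
definition "X k = part (tl b) k - 2"
definition "Y k = part Ys k"
definition "X0 z = (if z = 0 then j - 2 else X z)"
definition "z0 = (LEAST z. Y (Suc z) \<le> X0 z + m)"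
definition "U k = (if k \<le> z0 then Y k - m else X k)"
definition "V k = (if k \<le> z0 then X k + m else Y k)"
definition "gamma = (m + j - 1) # map (\<lambda>k. Suc (V k)) [Suc 0..<Suc T]"
definition "delta = (j + 1) # map (\<lambda>k. Suc (U k)) [Suc 0..<Suc T]"
definition "mu = partition_of_symbol m (j + 1) gamma delta"

lemma a_sorted: "sorted_wrt (\<ge>) a"
  using a(1) by (simp add: is_partition_def)

lemma a_eq: "a = (m + j) # (m + j) # (m + j) # drop 3 a"
proof -
  have "0 < part a 3" using a(3) m_pos by simp
  then obtain x1 x2 x3 rest where a': "a = x1 # x2 # x3 # rest"
    by (auto simp: part_def numeral_3_eq_3 split: if_splits)
       (metis Suc_le_length_iff)
  with a a_sorted show ?thesis by (auto simp: part_def numeral_3_eq_3)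
qed

lemma b_eq: "b = j # tl b"
  using b(3) length_a_less by (cases b) (auto simp: part_def)

lemma tl_b_sorted: "sorted_wrt (\<ge>) (tl b)"
  using b(1) by (cases b) auto

lemma tl_b_ge_2: "x \<in> set (tl b) \<Longrightarrow> 2 \<le> x"
  using b(2) by (cases b) auto

lemma tl_b_le_j: "x \<in> set (tl b) \<Longrightarrow> x \<le> j"
  using mem_le_part_1[OF b(1)] b(3) by (cases b) auto

lemma length_a_ge_3: "3 \<le> length a"
  by (subst a_eq) simp

lemma length_tl_b_ge_3: "3 \<le> length (tl b)"
  using length_a_less length_a_ge_3 by simp

lemma X_le: "X k \<le> j - 2"
proof -
  have "part (tl b) k \<le> j"
    using tl_b_le_j by (auto simp: part_def)
  then show ?thesis by (simp add: X_def)
qed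

lemma X_antimono: "1 \<le> k \<Longrightarrow> k \<le> k' \<Longrightarrow> X k' \<le> X k"
  unfolding X_def using part_antimono[OF tl_b_sorted] by (simp add: diff_le_mono)

lemma X0_le: "X0 k \<le> j - 2"
  using X_le by (simp add: X0_def)

lemma X0_antimono: "k \<le> k' \<Longrightarrow> X0 k' \<le> X0 k"
  using X_antimono X_le by (auto simp: X0_def)

lemma Ys_sorted: "sorted_wrt (\<ge>) Ys"
proof -
  have "\<forall>x\<in>set (drop 3 a). 1 \<le> x"
    using a(1) by (auto simp: is_partition_def Suc_le_eq dest: in_set_dropD)
  moreover have "sorted_wrt (\<ge>) (replicate n (1::nat))" for n
    by (induction n) auto
  ultimately show ?thesis
    using a_sorted by (auto simp: Ys_def sorted_wrt_append sorted_wrt_drop)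
qed

lemma Ys_pos: "\<forall>x\<in>set Ys. 0 < x"
  using a(1) by (auto simp: Ys_def is_partition_def dest: in_set_dropD)

lemma length_Ys: "length Ys + 2 \<le> length (tl b)"
  using length_a_less length_a_ge_3 by (simp add: Ys_def)

lemma Y_le: "Y k \<le> m + j"
proof -
  have "\<forall>x\<in>set Ys. x \<le> m + j"
    using mem_le_part_1[OF a_sorted] a(2) m_pos by (fastforce simp: Ys_def dest: in_set_dropD)
  then show ?thesis by (auto simp: Y_def part_def)
qed

lemma Y_antimono: "1 \<le> k \<Longrightarrow> k \<le> k' \<Longrightarrow> Y k' \<le> Y k"
  unfolding Y_def using part_antimono[OF Ys_sorted] by simp

lemma Y_eq_0: "length Ys < k \<Longrightarrow> Y k = 0"
  by (simp add: Y_def part_def)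

lemma z0_exists: "Y (Suc (length (tl b) - 2)) \<le> X0 (length (tl b) - 2) + m"
  using Y_eq_0 length_Ys by simp

lemma z0_less_T: "z0 < T"
proof -
  have "z0 \<le> length (tl b) - 2"
    unfolding z0_def by (rule Least_le) (rule z0_exists)
  with length_tl_b_ge_3 show ?thesis by (simp add: T_def)
qed

lemma z0_stop: "Y (Suc z0) \<le> X0 z0 + m"
  unfolding z0_def by (rule LeastI) (rule z0_exists)

lemma z0_before: "1 \<le> k \<Longrightarrow> k \<le> z0 \<Longrightarrow> X0 (k - 1) + m < Y k"
  using not_less_Least[of "k - 1" "\<lambda>z. Y (Suc z) \<le> X0 z + m"]
  by (cases k) (simp_all add: z0_def)

lemma U_plus_V: "1 \<le> k \<Longrightarrow> U k + V k = X k + Y k"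
  using z0_before[of k] by (auto simp: U_def V_def)

lemma U_le: "U k \<le> j"
  using Y_le[of k] X_le[of k] by (auto simp: U_def)

lemma V_le: "1 \<le> k \<Longrightarrow> V k \<le> m + j - 2"
proof (cases "k \<le> z0")
  case False
  then have "Y k \<le> Y (Suc z0)" using Y_antimono by simp
  also have "\<dots> \<le> X0 z0 + m" by (rule z0_stop)
  finally show ?thesis using False X0_le[of z0] j_ge_2 by (simp add: V_def)
qed (use X_le[of k] j_ge_2 in \<open>simp add: V_def\<close>)

lemma U_antimono: "1 \<le> k \<Longrightarrow> k \<le> k' \<Longrightarrow> U k' \<le> U k"
proof (cases "k' \<le> z0"; cases "k \<le> z0")
  assume k: "1 \<le> k" "k \<le> k'" and "\<not> k' \<le> z0" "k \<le> z0"
  then have "X k' \<le> X0 (k - 1)"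
    using X0_antimono[of "k - 1" k'] by (simp add: X0_def)
  also have "\<dots> < Y k - m" using z0_before[OF k(1)] \<open>k \<le> z0\<close> by simp
  finally show ?thesis using \<open>\<not> k' \<le> z0\<close> \<open>k \<le> z0\<close> by (simp add: U_def)
qed (auto simp: U_def diff_le_mono Y_antimono X_antimono)

lemma V_antimono: "1 \<le> k \<Longrightarrow> k \<le> k' \<Longrightarrow> V k' \<le> V k"
proof (cases "k' \<le> z0"; cases "k \<le> z0")
  assume k: "1 \<le> k" "k \<le> k'" and "\<not> k' \<le> z0" "k \<le> z0"
  then have "Y k' \<le> Y (Suc z0)" using Y_antimono[of "Suc z0" k'] by simp
  also have "\<dots> \<le> X0 z0 + m" by (rule z0_stop)
  also have "X0 z0 \<le> X k" using X0_antimono[of k z0] k \<open>k \<le> z0\<close> by (simp add: X0_def)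
  finally show ?thesis using \<open>\<not> k' \<le> z0\<close> \<open>k \<le> z0\<close> by (simp add: V_def)
qed (auto simp: V_def Y_antimono X_antimono)

lemma durfee_symbol_gamma_delta: "durfee_symbol m (j + 1) gamma delta"
proof
  have "sorted_wrt (\<ge>) (map (\<lambda>k. Suc (V k)) [Suc 0..<Suc T])"
    by (rule sorted_map_upt) (simp add: V_antimono)
  moreover have "\<forall>x\<in>set (map (\<lambda>k. Suc (V k)) [Suc 0..<Suc T]). x \<le> m + j - 1"
    using V_le j_ge_2 by fastforce
  ultimately show "is_partition gamma"
    using j_ge_2 by (auto simp: gamma_def is_partition_def)
  have "sorted_wrt (\<ge>) (map (\<lambda>k. Suc (U k)) [Suc 0..<Suc T])"
    by (rule sorted_map_upt) (simp add: U_antimono)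
  moreover have "\<forall>x\<in>set (map (\<lambda>k. Suc (U k)) [Suc 0..<Suc T]). x \<le> j + 1"
    using U_le by fastforce
  ultimately show "is_partition delta"
    by (auto simp: delta_def is_partition_def)
qed (auto simp: gamma_def delta_def part_def)

lemma length_gamma: "length gamma = Suc T"
  by (simp add: gamma_def)

lemma length_delta: "length delta = Suc T"
  by (simp add: delta_def)

lemma sum_X: "(\<Sum>k = Suc 0..T. X k) + 2 * length (tl b) = sum_list (tl b)"
proof -
  have "(\<Sum>k = Suc 0..T. X k) = sum_list (map (\<lambda>x. x - 2) (tl b))"
    using sum_part_upt[of "tl b" T "\<lambda>x. x - 2"] by (simp add: X_def T_def)
  then show ?thesis
    using sum_list_map_minus_add[of "tl b" 2] tl_b_ge_2 by simp
qed

lemma sum_Y: "(\<Sum>k = Suc 0..T. Y k) = sum_list (drop 3 a) + (m - 1) mod 2"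
proof -
  have "length Ys \<le> T"
    using length_Ys by (simp add: T_def)
  from sum_part_upt[of Ys T "\<lambda>x. x", OF this] show ?thesis
    by (simp add: Y_def Ys_def sum_list_replicate)
qed

lemma sum_list_mu: "sum_list mu = (m + j) * j + sum_list a + sum_list b"
proof -
  interpret durfee_symbol m "j + 1" gamma delta
    by (rule durfee_symbol_gamma_delta)
  have sum_Suc: "(\<Sum>k = Suc 0..N. Suc (f k)) = N + (\<Sum>k = Suc 0..N. f k)" for f N
    by (induction N) auto
  have "sum_list gamma + sum_list delta = m + 2 * j + 2 * T + (\<Sum>k = Suc 0..T. U k + V k)"
    using j_ge_2 by (simp add: gamma_def delta_def sum_list_map_upt sum_Suc sum.distrib)
  also have "(\<Sum>k = Suc 0..T. U k + V k) = (\<Sum>k = Suc 0..T. X k) + (\<Sum>k = Suc 0..T. Y k)"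
    by (simp add: U_plus_V sum.distrib[symmetric])
  finally have "sum_list gamma + sum_list delta + 2 * length (tl b)
      = m + 2 * j + 2 * T + sum_list (tl b) + sum_list (drop 3 a) + (m - 1) mod 2"
    using sum_X sum_Y by simp
  moreover have "sum_list a = 3 * (m + j) + sum_list (drop 3 a)"
    by (subst a_eq) simp
  moreover have "sum_list b = j + sum_list (tl b)"
    by (subst b_eq) simp
  moreover have "2 * T + (m - 1) mod 2 + 1 = 2 * length (tl b) + m"
  proof -
    have "2 * ((m - 1) div 2) + (m - 1) mod 2 = m - 1" by simp
    with m_pos show ?thesis by (simp add: T_def)
  qed
  moreover have "sum_list mu = (m + (j + 1)) * (j + 1) + sum_list gamma + sum_list delta"
    unfolding mu_def by (rule sum_list_partition_of_symbol)
  ultimately show ?thesis by (simp add: algebra_simps)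
qed

lemma U_eq_part_delta: "1 \<le> k \<Longrightarrow> U k = part delta (Suc k) - 1"
proof (cases "k \<le> T")
  case False
  then have "U k = 0"
    using z0_less_T by (simp add: U_def X_def part_def T_def)
  with False show ?thesis by (simp add: part_def length_delta)
qed (simp add: delta_def part_Cons_Suc part_map_upt)

lemma V_eq_part_gamma: "1 \<le> k \<Longrightarrow> V k = part gamma (Suc k) - 1"
proof (cases "k \<le> T")
  case False
  then have "V k = 0"
    using z0_less_T length_Ys Y_eq_0[of k] by (simp add: V_def T_def)
  with False show ?thesis by (simp add: part_def length_gamma)
qed (simp add: gamma_def part_Cons_Suc part_map_upt)

text \<open>The exchange of \<open>X\<close> and \<open>Y\<close> can be undone: its end \<open>z0\<close> is the first place where
  the exchanged sequences \<open>U\<close> and \<open>V\<close> satisfy the stopping condition.\<close>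
lemma z0_eq: "z0 = (LEAST z. U (Suc z) + m \<le> (if z = 0 then m + j - 2 else V z))"
proof (rule Least_equality[symmetric])
  have "U (Suc z0) \<le> X0 z0"
    using X_le[of 1] X_antimono[of z0 "Suc z0"] by (simp add: U_def X0_def)
  then show "U (Suc z0) + m \<le> (if z0 = 0 then m + j - 2 else V z0)"
    using j_ge_2 by (cases "z0 = 0") (simp_all add: V_def X0_def)
next
  fix z assume z: "U (Suc z) + m \<le> (if z = 0 then m + j - 2 else V z)"
  show "z0 \<le> z"
  proof (rule ccontr)
    assume "\<not> z0 \<le> z"
    then have "X0 z + m < Y (Suc z)" and "U (Suc z) = Y (Suc z) - m"
      using z0_before[of "Suc z"] by (simp_all add: U_def)
    with z j_ge_2 \<open>\<not> z0 \<le> z\<close> show False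
      by (cases "z = 0") (simp_all add: V_def X0_def)
  qed
qed

lemma X_eq: "X k = (if k \<le> z0 then V k - m else U k)"
  by (simp add: U_def V_def)

lemma Y_eq: "1 \<le> k \<Longrightarrow> Y k = (if k \<le> z0 then U k + m else V k)"
  using z0_before[of k] by (auto simp: U_def V_def)

lemma tl_b_eq: "tl b = map (\<lambda>k. X k + 2) [Suc 0..<Suc (T - (m - 1) div 2)]"
proof -
  have "map (\<lambda>k. X k + 2) [Suc 0..<Suc (length (tl b))] = map (part (tl b)) [Suc 0..<Suc (length (tl b))]"
  proof (rule map_cong[OF refl])
    fix k assume "k \<in> set [Suc 0..<Suc (length (tl b))]"
    then have "2 \<le> part (tl b) k"
      by (auto simp: part_def intro: tl_b_ge_2)
    then show "X k + 2 = part (tl b) k" by (simp add: X_def)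
  qed
  then show ?thesis by (simp add: map_part_upt T_def)
qed

lemma Ys_eq: "Ys = takeWhile ((<) 0) (map Y [Suc 0..<Suc T])"
proof -
  have "length Ys < T"
    using length_Ys by (simp add: T_def)
  then have "map Y [Suc 0..<Suc T] = Ys @ replicate (T - length Ys) 0 \<and> T - length Ys \<noteq> 0"
    unfolding Y_def map_part_upt by simp
  then show ?thesis
    using Ys_pos by (simp add: takeWhile_append2)
qed

lemma mu_in_P6: "mu \<in> P6 m (sum_list mu)"
proof -
  interpret durfee_symbol m "j + 1" gamma delta
    by (rule durfee_symbol_gamma_delta)
  have "is_partition mu" "durfee_j m mu = j + 1"
    "durfee_alpha m mu = gamma" "durfee_beta m mu = delta"
    "part mu 1 = j + 1 + length gamma" "length mu = m + (j + 1) + length delta"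
    unfolding mu_def
    by (fact is_partition_partition_of_symbol durfee_j_partition_of_symbol
        durfee_alpha_partition_of_symbol durfee_beta_partition_of_symbol
        part_1_partition_of_symbol length_partition_of_symbol)+
  then show ?thesis
    using m_pos j_ge_2
    by (simp add: P6_def Pset_def partitions_def prank_def length_gamma length_delta)
      (simp add: gamma_def delta_def part_def)
qed

end

lemma Q6_symbol_mu_inj:
  assumes A: "Q6_symbol m j a b" and B: "Q6_symbol m j' a' b'"
    and mu: "Q6_symbol.mu m j a b = Q6_symbol.mu m j' a' b'"
  shows "j = j' \<and> a = a' \<and> b = b'"
proof -
  interpret A: Q6_symbol m j a b by (fact A)
  interpret B: Q6_symbol m j' a' b' by (fact B)
  interpret A': durfee_symbol m "j + 1" A.gamma A.delta by (fact A.durfee_symbol_gamma_delta)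
  interpret B': durfee_symbol m "j' + 1" B.gamma B.delta by (fact B.durfee_symbol_gamma_delta)
  have j: "j = j'"
    using A'.durfee_j_partition_of_symbol B'.durfee_j_partition_of_symbol mu
    by (simp add: A.mu_def B.mu_def)
  have gamma: "A.gamma = B.gamma" and delta: "A.delta = B.delta"
    using A'.durfee_alpha_partition_of_symbol B'.durfee_alpha_partition_of_symbol
      A'.durfee_beta_partition_of_symbol B'.durfee_beta_partition_of_symbol mu
    by (simp_all add: A.mu_def B.mu_def)
  have T: "A.T = B.T"
    using arg_cong[OF gamma, of length] by (simp add: A.length_gamma B.length_gamma)
  have U: "A.U k = B.U k" and V: "A.V k = B.V k" if "1 \<le> k" for k
    using that A.U_eq_part_delta B.U_eq_part_delta A.V_eq_part_gamma B.V_eq_part_gamma gamma delta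
    by simp_all
  have z0: "A.z0 = B.z0"
    unfolding A.z0_eq B.z0_eq using U V j by simp
  have X: "A.X k = B.X k" and Y: "A.Y k = B.Y k" if "1 \<le> k" for k
    using that A.X_eq B.X_eq A.Y_eq B.Y_eq U V z0 by simp_all
  have "tl b = tl b'"
    unfolding A.tl_b_eq B.tl_b_eq T using X by (intro map_cong) auto
  then have "b = b'"
    by (subst A.b_eq, subst B.b_eq) (simp add: j)
  have "A.Ys = B.Ys"
    unfolding A.Ys_eq B.Ys_eq T using Y by (intro arg_cong[where f = "takeWhile _"] map_cong) auto
  then have "drop 3 a = drop 3 a'"
    by (simp add: A.Ys_def B.Ys_def)
  have "a = (m + j) # (m + j) # (m + j) # drop 3 a" by (rule A.a_eq)
  also have "\<dots> = a'"
    by (subst B.a_eq) (simp add: \<open>drop 3 a = drop 3 a'\<close> j)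
  finally show ?thesis
    using j \<open>b = b'\<close> by simp
qed

section \<open>From \<open>Q\<^sub>6\<close> to \<open>P\<^sub>6\<close>\<close>

lemma Q6_symbol_of_Q6:
  assumes m: "1 \<le> m" and l: "l \<in> Q6 m n"
  shows "Q6_symbol m (durfee_j m l) (durfee_alpha m l) (durfee_beta m l)"
proof -
  define j where "j = durfee_j m l"
  define \<alpha> where "\<alpha> = durfee_alpha m l"
  define \<beta> where "\<beta> = durfee_beta m l"
  have l_part: "is_partition l" and rank: "int m \<in> rank_set l"
    using l by (auto simp: Q6_def Qset_def partitions_def)
  have j: "1 \<le> j" and length: "length \<alpha> < length \<beta>" and \<alpha>3: "part \<alpha> 3 = m + j"
    and \<beta>2: "smallest \<beta> \<ge> 2"
    using l by (auto simp: Q6_def Let_def j_def \<alpha>_def \<beta>_def)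
  interpret durfee_symbol m j \<alpha> \<beta>
    unfolding j_def \<alpha>_def \<beta>_def using durfee_symbol_of_partition[OF l_part] j j_def by blast
  have \<beta>1: "part \<beta> 1 = j"
    using rank l_part by (simp add: mem_rank_set_iff is_partition_def \<beta>_def j_def durfee_beta_def part_drop)
  have \<beta>_ne: "\<beta> \<noteq> []" using length by auto
  then have \<beta>_ge_2: "\<forall>x\<in>set \<beta>. 2 \<le> x"
    using \<beta>2 by (simp add: smallest_def)
  with \<beta>1 \<beta>_ne have "2 \<le> j"
    by (cases \<beta>) (auto simp: part_def)
  then show ?thesis
    unfolding j_def[symmetric] \<alpha>_def[symmetric] \<beta>_def[symmetric]
    using m g \<alpha>3 d(1) \<beta>_ge_2 \<beta>1 length
    by unfold_locales (simp_all add: is_partition_def)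
qed

definition Q6_to_P6 :: "nat \<Rightarrow> nat list \<Rightarrow> nat list" where
  "Q6_to_P6 m l = Q6_symbol.mu m (durfee_j m l) (durfee_alpha m l) (durfee_beta m l)"

lemma inj_on_Q6_to_P6:
  assumes "1 \<le> m"
  shows "inj_on (Q6_to_P6 m) (Q6 m n)"
proof (rule inj_onI)
  fix l l' assume l: "l \<in> Q6 m n" and l': "l' \<in> Q6 m n" and eq: "Q6_to_P6 m l = Q6_to_P6 m l'"
  have "is_partition l" "is_partition l'"
    using l l' by (auto simp: Q6_def Qset_def partitions_def)
  moreover have "1 \<le> durfee_j m l" "1 \<le> durfee_j m l'"
    using l l' by (auto simp: Q6_def Let_def)
  moreover have "durfee_j m l = durfee_j m l' \<and> durfee_alpha m l = durfee_alpha m l' \<and>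
      durfee_beta m l = durfee_beta m l'"
    using Q6_symbol_mu_inj[OF Q6_symbol_of_Q6[OF assms l] Q6_symbol_of_Q6[OF assms l']] eq
    by (simp add: Q6_to_P6_def)
  ultimately show "l = l'"
    using partition_of_durfee_symbol by metis
qed

lemma Q6_to_P6_in_P6:
  assumes "1 \<le> m" and l: "l \<in> Q6 m n"
  shows "Q6_to_P6 m l \<in> P6 m n"
proof -
  interpret Q6_symbol m "durfee_j m l" "durfee_alpha m l" "durfee_beta m l"
    by (rule Q6_symbol_of_Q6[OF assms])
  have "is_partition l" "sum_list l = n" "1 \<le> durfee_j m l"
    using l by (auto simp: Q6_def Qset_def partitions_def Let_def)
  then have "sum_list mu = n"
    using sum_list_mu durfee_symbol.sum_list_partition_of_symbol[OF durfee_symbol_of_partition]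
      partition_of_durfee_symbol by metis
  with mu_in_P6 show ?thesis
    by (simp add: Q6_to_P6_def)
qed

theorem lemma4p7:
  fixes m n :: nat
  assumes "1 \<le> m" and "1 \<le> n"
  shows "\<exists>f. inj_on f (Q6 m n) \<and> f ` Q6 m n \<subseteq> P6 m n"
  using inj_on_Q6_to_P6[OF assms(1)] Q6_to_P6_in_P6[OF assms(1)] by blast

end
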